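(* Let $(X,r)$ be a non-degenerate involutive set-theoretic solution with $|X|=n$, identified with $\{1,\dots,n\}$, with table $\mathcal{T}$, and let $(\mathcal{X}^2,\tilde r)$ be the induced pair. Let $\mathrm{Orb}(T_1^1)$ be the orbit of $T_1^1$ under the action of the structure group $G(\mathcal{X}^2,\tilde r)$ on $\mathcal{X}^2$. The following are equivalent: (i) $(\mathcal{X}^2,\tilde r)$ is indecomposable; (ii) $\mathrm{Orb}(T_1^1)=\mathcal{X}^2$; (iii) for every $1\le s,m\le n$ there exist a natural number $\ell$ and $1\le i_1,\dots,i_\ell,k_1,\dots,k_\ell\le n$ such that $\sigma_{i_1}\sigma_{i_2}\cdots\sigma_{i_\ell}(1)=s$ and $\sigma_{k_1}\sigma_{k_2}\cdots\sigma_{k_\ell}(1)=m$; (iv) for every $1\le s,m\le n$ there exists a natural number $\ell$ such that $s$ and $m$ both appear in column $\ell$ of $\mathcal{T}$.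
   Context: A set-theoretic solution is $r:X\times X\to X\times X$, $r(x,y)=(\sigma_x(y),\gamma_y(x))$, with $r^{12}r^{23}r^{12}=r^{23}r^{12}r^{23}$; non-degenerate: all $\sigma_x,\gamma_x$ bijective; involutive: $r\circ r=\mathrm{Id}$. Induced pair: $\mathcal{X}^2=\{T_i^k:1\le i,k\le n\}$ ($n^2$ symbols), $\tilde r(T_i^k,T_j^l)=(g_i^k(T_j^l),f_j^l(T_i^k))$ with $g_i^k(T_j^l)=T_{\sigma_i(j)}^{\sigma_k(l)}$, $f_j^l(T_i^k)=T_{\gamma_j(i)}^{\gamma_l(k)}$; it is a non-degenerate involutive solution. The structure group of a solution $(Y,s)$ with $s(x,y)=(\alpha_x(y),\beta_y(x))$ is $G(Y,s)=\langle Y\mid xy=\alpha_x(y)\beta_y(x),\ x,y\in Y\rangle$; it acts on $Y$ with generator $x$ acting as $\alpha_x$ (so for $G(\mathcal{X}^2,\tilde r)$, the generator $T_i^k$ acts as $g_i^k$). A subset $Z$ is non-degenerate invariant if $s(Z\times Z)\subseteq Z\times Z$ and the restriction is a non-degenerate involutive solution; a solution is decomposable if it is a union of two non-empty disjoint non-degenerate invariant subsets, indecomposable otherwise. The table $\mathcal{T}$ of $(X,r)$ has columns indexed by natural numbers $\ell\ge1$, and column $\ell$ consists of all $s\in X$ for which there exist $1\le i_1,\dots,i_\ell\le n$ with $\sigma_{i_1}\sigma_{i_2}\cdots\sigma_{i_\ell}(1)=s$. *)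

theory Defs
  imports Main
begin

text \<open>A map s(x,y) = (alpha x y, beta y x) on a carrier Y.\<close>

definition braid_on :: "'a set \<Rightarrow> ('a \<Rightarrow> 'a \<Rightarrow> 'a) \<Rightarrow> ('a \<Rightarrow> 'a \<Rightarrow> 'a) \<Rightarrow> bool" where
  "braid_on Y \<alpha> \<beta> \<longleftrightarrow>
     (\<forall>x\<in>Y. \<forall>y\<in>Y. \<alpha> x y \<in> Y \<and> \<beta> y x \<in> Y) \<and>
     (\<forall>x\<in>Y. \<forall>y\<in>Y. \<forall>z\<in>Y.
        \<comment> \<open>r12 r23 r12 (x,y,z) = r23 r12 r23 (x,y,z)\<close>
        (let (a1, b1) = (\<alpha> x y, \<beta> y x);
             (b2, c2) = (\<alpha> b1 z, \<beta> z b1);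
             (a3, b3) = (\<alpha> a1 b2, \<beta> b2 a1);
             (p1, q1) = (\<alpha> y z, \<beta> z y);
             (x2, p2) = (\<alpha> x p1, \<beta> p1 x);
             (p3, q3) = (\<alpha> p2 q1, \<beta> q1 p2)
         in (a3, b3, c2) = (x2, p3, q3)))"

definition nondegenerate_on :: "'a set \<Rightarrow> ('a \<Rightarrow> 'a \<Rightarrow> 'a) \<Rightarrow> ('a \<Rightarrow> 'a \<Rightarrow> 'a) \<Rightarrow> bool" where
  "nondegenerate_on Y \<alpha> \<beta> \<longleftrightarrow> (\<forall>x\<in>Y. bij_betw (\<alpha> x) Y Y \<and> bij_betw (\<beta> x) Y Y)"

definition involutive_on :: "'a set \<Rightarrow> ('a \<Rightarrow> 'a \<Rightarrow> 'a) \<Rightarrow> ('a \<Rightarrow> 'a \<Rightarrow> 'a) \<Rightarrow> bool" where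
  "involutive_on Y \<alpha> \<beta> \<longleftrightarrow>
     (\<forall>x\<in>Y. \<forall>y\<in>Y. \<alpha> (\<alpha> x y) (\<beta> y x) = x \<and> \<beta> (\<beta> y x) (\<alpha> x y) = y)"

definition nd_inv_solution :: "'a set \<Rightarrow> ('a \<Rightarrow> 'a \<Rightarrow> 'a) \<Rightarrow> ('a \<Rightarrow> 'a \<Rightarrow> 'a) \<Rightarrow> bool" where
  "nd_inv_solution Y \<alpha> \<beta> \<longleftrightarrow> braid_on Y \<alpha> \<beta> \<and> nondegenerate_on Y \<alpha> \<beta> \<and> involutive_on Y \<alpha> \<beta>"

definition nd_invariant :: "'a set \<Rightarrow> ('a \<Rightarrow> 'a \<Rightarrow> 'a) \<Rightarrow> ('a \<Rightarrow> 'a \<Rightarrow> 'a) \<Rightarrow> 'a set \<Rightarrow> bool" where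
  "nd_invariant Y \<alpha> \<beta> Z \<longleftrightarrow> Z \<subseteq> Y \<and>
     (\<forall>x\<in>Z. \<forall>y\<in>Z. \<alpha> x y \<in> Z \<and> \<beta> y x \<in> Z) \<and> nd_inv_solution Z \<alpha> \<beta>"

definition decomposable :: "'a set \<Rightarrow> ('a \<Rightarrow> 'a \<Rightarrow> 'a) \<Rightarrow> ('a \<Rightarrow> 'a \<Rightarrow> 'a) \<Rightarrow> bool" where
  "decomposable Y \<alpha> \<beta> \<longleftrightarrow> (\<exists>Z1 Z2. Z1 \<noteq> {} \<and> Z2 \<noteq> {} \<and> Z1 \<inter> Z2 = {} \<and> Z1 \<union> Z2 = Y \<and>
      nd_invariant Y \<alpha> \<beta> Z1 \<and> nd_invariant Y \<alpha> \<beta> Z2)"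

definition indecomposable :: "'a set \<Rightarrow> ('a \<Rightarrow> 'a \<Rightarrow> 'a) \<Rightarrow> ('a \<Rightarrow> 'a \<Rightarrow> 'a) \<Rightarrow> bool" where
  "indecomposable Y \<alpha> \<beta> \<longleftrightarrow> \<not> decomposable Y \<alpha> \<beta>"

text \<open>Orbit of y under the action of the structure group G(Y,s), generated by the
  generators x \<in> Y acting as alpha_x (and their inverses, acting as alpha_x^{-1}).\<close>
inductive_set struct_orbit :: "'a set \<Rightarrow> ('a \<Rightarrow> 'a \<Rightarrow> 'a) \<Rightarrow> 'a \<Rightarrow> 'a set"
  for Y :: "'a set" and \<alpha> :: "'a \<Rightarrow> 'a \<Rightarrow> 'a" and y :: 'a where
  base: "y \<in> struct_orbit Y \<alpha> y"
| gen: "z \<in> struct_orbit Y \<alpha> y \<Longrightarrow> x \<in> Y \<Longrightarrow> \<alpha> x z \<in> struct_orbit Y \<alpha> y"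
| gen_inv: "z \<in> struct_orbit Y \<alpha> y \<Longrightarrow> x \<in> Y \<Longrightarrow> inv_into Y (\<alpha> x) z \<in> struct_orbit Y \<alpha> y"

text \<open>Induced pair on X^2: T_i^k is the pair (i,k).\<close>
definition ind_g :: "(nat \<Rightarrow> nat \<Rightarrow> nat) \<Rightarrow> nat \<times> nat \<Rightarrow> nat \<times> nat \<Rightarrow> nat \<times> nat" where
  "ind_g \<sigma> T U = (\<sigma> (fst T) (fst U), \<sigma> (snd T) (snd U))"

definition ind_f :: "(nat \<Rightarrow> nat \<Rightarrow> nat) \<Rightarrow> nat \<times> nat \<Rightarrow> nat \<times> nat \<Rightarrow> nat \<times> nat" where
  "ind_f \<gamma> U T = (\<gamma> (fst U) (fst T), \<gamma> (snd U) (snd T))"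

text \<open>sigma_{i_1} ... sigma_{i_l}(1) for the word is = [i_1,...,i_l].\<close>
definition word_apply :: "(nat \<Rightarrow> nat \<Rightarrow> nat) \<Rightarrow> nat list \<Rightarrow> nat \<Rightarrow> nat" where
  "word_apply \<sigma> is x = foldr (\<lambda>i acc. \<sigma> i acc) is x"

definition table_column :: "nat \<Rightarrow> (nat \<Rightarrow> nat \<Rightarrow> nat) \<Rightarrow> nat \<Rightarrow> nat set" where
  "table_column n \<sigma> l = {s \<in> {1..n}. \<exists>is. length is = l \<and> set is \<subseteq> {1..n} \<and> word_apply \<sigma> is 1 = s}"

end

theory Submission
  imports Defs
begin

(* In a finite non-degenerate involutive solution, a subset Z that is mapped onto itself by
   every \<alpha>_x is a non-degenerate invariant subset: its complement is stable as well, and if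
   \<beta>_y x left Z for x, y in Z, involutivity would put x = \<alpha>_(\<alpha>_x y) (\<beta>_y x) in the complement.
   Conversely, each part of a decomposition is stable under every \<alpha>_x, hence contains the orbit
   of each of its points; so indecomposability means that the action is transitive.
   In the induced pair T_i^k acts as \<sigma>_i \<times> \<sigma>_k. *)

lemma braid_on_iff:
  "braid_on Y \<alpha> \<beta> \<longleftrightarrow> (\<forall>x\<in>Y. \<forall>y\<in>Y. \<alpha> x y \<in> Y \<and> \<beta> y x \<in> Y) \<and>
     (\<forall>x\<in>Y. \<forall>y\<in>Y. \<forall>z\<in>Y. \<alpha> (\<alpha> x y) (\<alpha> (\<beta> y x) z) = \<alpha> x (\<alpha> y z) \<and>
        \<beta> (\<alpha> (\<beta> y x) z) (\<alpha> x y) = \<alpha> (\<beta> (\<alpha> y z) x) (\<beta> z y) \<and>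
        \<beta> z (\<beta> y x) = \<beta> (\<beta> z y) (\<beta> (\<alpha> y z) x))"
  unfolding braid_on_def Let_def by simp

lemma braid_on_subset:
  assumes "braid_on Y \<alpha> \<beta>" "Z \<subseteq> Y" "\<forall>x\<in>Z. \<forall>y\<in>Z. \<alpha> x y \<in> Z \<and> \<beta> y x \<in> Z"
  shows "braid_on Z \<alpha> \<beta>"
  using assms unfolding braid_on_iff by blast

lemma involutive_on_subset:
  "involutive_on Y \<alpha> \<beta> \<Longrightarrow> Z \<subseteq> Y \<Longrightarrow> involutive_on Z \<alpha> \<beta>"
  unfolding involutive_on_def by blast

lemma ind_g_eq_map_prod: "ind_g \<sigma> T = map_prod (\<sigma> (fst T)) (\<sigma> (snd T))"
  by (auto simp: ind_g_def)

lemma ind_f_eq_map_prod: "ind_f \<gamma> U = map_prod (\<gamma> (fst U)) (\<gamma> (snd U))"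
  by (auto simp: ind_f_def)

lemma bij_betw_ind_g:
  assumes "\<forall>i\<in>Y. bij_betw (\<sigma> i) Y Y" "T \<in> Y \<times> Y"
  shows "bij_betw (ind_g \<sigma> T) (Y \<times> Y) (Y \<times> Y)"
  using assms unfolding ind_g_eq_map_prod by (auto intro: bij_betw_map_prod)

lemma braid_on_induced:
  assumes "braid_on Y \<sigma> \<gamma>"
  shows "braid_on (Y \<times> Y) (ind_g \<sigma>) (ind_f \<gamma>)"
proof -
  note closed = assms[unfolded braid_on_iff, THEN conjunct1, rule_format]
  note eqs = assms[unfolded braid_on_iff, THEN conjunct2, rule_format]
  show ?thesis
    unfolding braid_on_iff
  proof (intro conjI ballI)
    fix x y assume "x \<in> Y \<times> Y" "y \<in> Y \<times> Y"
    then show "ind_g \<sigma> x y \<in> Y \<times> Y" "ind_f \<gamma> y x \<in> Y \<times> Y"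
      using closed[of "fst x" "fst y"] closed[of "snd x" "snd y"]
      by (simp_all add: ind_g_def ind_f_def mem_Times_iff)
  next
    fix x y z assume "x \<in> Y \<times> Y" "y \<in> Y \<times> Y" "z \<in> Y \<times> Y"
    then show "ind_g \<sigma> (ind_g \<sigma> x y) (ind_g \<sigma> (ind_f \<gamma> y x) z) = ind_g \<sigma> x (ind_g \<sigma> y z)"
      and "ind_f \<gamma> (ind_g \<sigma> (ind_f \<gamma> y x) z) (ind_g \<sigma> x y) = ind_g \<sigma> (ind_f \<gamma> (ind_g \<sigma> y z) x) (ind_f \<gamma> z y)"
      and "ind_f \<gamma> z (ind_f \<gamma> y x) = ind_f \<gamma> (ind_f \<gamma> z y) (ind_f \<gamma> (ind_g \<sigma> y z) x)"
      using eqs[of "fst x" "fst y" "fst z"] eqs[of "snd x" "snd y" "snd z"]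
      by (simp_all add: ind_g_def ind_f_def mem_Times_iff)
  qed
qed

lemma nd_inv_solution_induced:
  assumes "nd_inv_solution Y \<sigma> \<gamma>"
  shows "nd_inv_solution (Y \<times> Y) (ind_g \<sigma>) (ind_f \<gamma>)"
proof -
  have "nondegenerate_on (Y \<times> Y) (ind_g \<sigma>) (ind_f \<gamma>)"
    using assms unfolding nd_inv_solution_def nondegenerate_on_def ind_g_eq_map_prod ind_f_eq_map_prod
    by (auto intro: bij_betw_map_prod)
  moreover have "involutive_on (Y \<times> Y) (ind_g \<sigma>) (ind_f \<gamma>)"
    using assms unfolding nd_inv_solution_def involutive_on_def by (auto simp: ind_g_def ind_f_def)
  ultimately show ?thesis
    using assms braid_on_induced unfolding nd_inv_solution_def by blast
qed

lemma image_complement_eq: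
  assumes "bij_betw f Y Y" "Z \<subseteq> Y" "f ` Z = Z"
  shows "f ` (Y - Z) = Y - Z"
  using assms by (simp add: bij_betw_def inj_on_image_set_diff[of f Y Y Z])

lemma struct_orbit_subset:
  assumes "\<forall>x\<in>Y. inj_on (\<alpha> x) Y" "y \<in> Z" "Z \<subseteq> Y" "\<forall>x\<in>Y. \<alpha> x ` Z = Z"
  shows "struct_orbit Y \<alpha> y \<subseteq> Z"
proof
  fix p assume "p \<in> struct_orbit Y \<alpha> y"
  then show "p \<in> Z"
  proof (induction rule: struct_orbit.induct)
    case (gen_inv z x)
    then obtain v where "v \<in> Z" "z = \<alpha> x v"
      using assms(4) by blast
    then show ?case
      using assms(1,3) gen_inv.hyps(2) by (auto simp: inv_into_f_f)
  qed (use assms in blast)+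
qed

lemma struct_orbit_subset_carrier:
  "\<forall>x\<in>Y. bij_betw (\<alpha> x) Y Y \<Longrightarrow> y \<in> Y \<Longrightarrow> struct_orbit Y \<alpha> y \<subseteq> Y"
  by (rule struct_orbit_subset) (auto simp: bij_betw_def)

lemma struct_orbit_image_eq:
  assumes bij: "\<forall>x\<in>Y. bij_betw (\<alpha> x) Y Y" and "y \<in> Y" "x \<in> Y"
  shows "\<alpha> x ` struct_orbit Y \<alpha> y = struct_orbit Y \<alpha> y"
proof
  have orbit_sub: "struct_orbit Y \<alpha> y \<subseteq> Y"
    using bij \<open>y \<in> Y\<close> by (rule struct_orbit_subset_carrier)
  show "\<alpha> x ` struct_orbit Y \<alpha> y \<subseteq> struct_orbit Y \<alpha> y"
    using \<open>x \<in> Y\<close> by (blast intro: struct_orbit.gen)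
  show "struct_orbit Y \<alpha> y \<subseteq> \<alpha> x ` struct_orbit Y \<alpha> y"
  proof
    fix z assume z: "z \<in> struct_orbit Y \<alpha> y"
    then have "z \<in> \<alpha> x ` Y"
      using orbit_sub bij \<open>x \<in> Y\<close> by (auto simp: bij_betw_def)
    then have "z = \<alpha> x (inv_into Y (\<alpha> x) z)"
      by (simp add: f_inv_into_f)
    moreover have "inv_into Y (\<alpha> x) z \<in> struct_orbit Y \<alpha> y"
      using z \<open>x \<in> Y\<close> by (rule struct_orbit.gen_inv)
    ultimately show "z \<in> \<alpha> x ` struct_orbit Y \<alpha> y"
      by blast
  qed
qed

lemma nd_invariant_if_image_eq:
  assumes "finite Y" and sol: "nd_inv_solution Y \<alpha> \<beta>"
    and "Z \<subseteq> Y" and stable: "\<forall>x\<in>Y. \<alpha> x ` Z = Z"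
  shows "nd_invariant Y \<alpha> \<beta> Z"
proof -
  have bij_\<alpha>: "bij_betw (\<alpha> x) Y Y" and bij_\<beta>: "bij_betw (\<beta> x) Y Y" if "x \<in> Y" for x
    using sol that unfolding nd_inv_solution_def nondegenerate_on_def by blast+
  have \<beta>_closed: "\<beta> y x \<in> Z" if "x \<in> Z" "y \<in> Z" for x y
  proof (rule ccontr)
    assume "\<beta> y x \<notin> Z"
    have "x \<in> Y" "y \<in> Y"
      using that \<open>Z \<subseteq> Y\<close> by blast+
    then have "\<alpha> x y \<in> Y" "\<beta> y x \<in> Y"
      using bij_betw_apply[OF bij_\<alpha>] bij_betw_apply[OF bij_\<beta>] by blast+
    have "\<alpha> (\<alpha> x y) (\<beta> y x) = x"
      using sol \<open>x \<in> Y\<close> \<open>y \<in> Y\<close> unfolding nd_inv_solution_def involutive_on_def by blast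
    then have "x \<in> \<alpha> (\<alpha> x y) ` (Y - Z)"
      using \<open>\<beta> y x \<in> Y\<close> \<open>\<beta> y x \<notin> Z\<close> by (blast intro: image_eqI[OF sym])
    also have "\<dots> = Y - Z"
      using \<open>\<alpha> x y \<in> Y\<close> stable by (intro image_complement_eq bij_\<alpha> \<open>Z \<subseteq> Y\<close>) blast+
    finally show False
      using \<open>x \<in> Z\<close> by blast
  qed
  have \<alpha>_closed: "\<alpha> x y \<in> Z" if "x \<in> Z" "y \<in> Z" for x y
  proof -
    have "\<alpha> x y \<in> \<alpha> x ` Z"
      using \<open>y \<in> Z\<close> by (rule imageI)
    also have "\<alpha> x ` Z = Z"
      using stable \<open>x \<in> Z\<close> \<open>Z \<subseteq> Y\<close> by blast
    finally show ?thesis .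
  qed
  have closed: "\<forall>x\<in>Z. \<forall>y\<in>Z. \<alpha> x y \<in> Z \<and> \<beta> y x \<in> Z"
    using \<alpha>_closed \<beta>_closed by blast
  have "nondegenerate_on Z \<alpha> \<beta>"
    unfolding nondegenerate_on_def
  proof
    fix x assume "x \<in> Z"
    then have "x \<in> Y"
      using \<open>Z \<subseteq> Y\<close> by blast
    then have inj: "inj_on (\<alpha> x) Z" "inj_on (\<beta> x) Z"
      using bij_\<alpha> bij_\<beta> \<open>Z \<subseteq> Y\<close> by (meson bij_betw_def inj_on_subset)+
    have "\<beta> x ` Z = Z"
      using endo_inj_surj[OF finite_subset[OF \<open>Z \<subseteq> Y\<close> \<open>finite Y\<close>] _ inj(2)] closed \<open>x \<in> Z\<close>
      by blast
    moreover have "\<alpha> x ` Z = Z"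
      using stable \<open>x \<in> Y\<close> by blast
    ultimately show "bij_betw (\<alpha> x) Z Z \<and> bij_betw (\<beta> x) Z Z"
      using inj by (simp add: bij_betw_def)
  qed
  moreover have "braid_on Z \<alpha> \<beta>"
    using sol braid_on_subset[OF _ \<open>Z \<subseteq> Y\<close> closed] unfolding nd_inv_solution_def by blast
  moreover have "involutive_on Z \<alpha> \<beta>"
    using sol involutive_on_subset[OF _ \<open>Z \<subseteq> Y\<close>] unfolding nd_inv_solution_def by blast
  ultimately show ?thesis
    using closed \<open>Z \<subseteq> Y\<close> unfolding nd_invariant_def nd_inv_solution_def by blast
qed

lemma decomposition_part_image_eq:
  assumes sol: "nd_inv_solution Y \<alpha> \<beta>"
    and Z1: "nd_invariant Y \<alpha> \<beta> Z1" and Z2: "nd_invariant Y \<alpha> \<beta> Z2"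
    and "Z1 \<inter> Z2 = {}" "Z1 \<union> Z2 = Y" "x \<in> Y"
  shows "\<alpha> x ` Z1 = Z1"
proof (cases "x \<in> Z1")
  case True
  then show ?thesis
    using Z1 unfolding nd_invariant_def nd_inv_solution_def nondegenerate_on_def bij_betw_def by blast
next
  case False
  then have "x \<in> Z2" using assms by blast
  then have "\<alpha> x ` Z2 = Z2"
    using Z2 unfolding nd_invariant_def nd_inv_solution_def nondegenerate_on_def bij_betw_def by blast
  moreover have "bij_betw (\<alpha> x) Y Y"
    using sol \<open>x \<in> Y\<close> unfolding nd_inv_solution_def nondegenerate_on_def by blast
  moreover have "Z2 \<subseteq> Y" "Z1 = Y - Z2"
    using assms by blast+
  ultimately show ?thesis
    using image_complement_eq[of "\<alpha> x" Y Z2] by simp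
qed

theorem indecomposable_iff_struct_orbit_eq:
  assumes "finite Y" and sol: "nd_inv_solution Y \<alpha> \<beta>" and "y \<in> Y"
  shows "indecomposable Y \<alpha> \<beta> \<longleftrightarrow> struct_orbit Y \<alpha> y = Y"
proof -
  let ?O = "struct_orbit Y \<alpha> y"
  have bij: "\<forall>x\<in>Y. bij_betw (\<alpha> x) Y Y"
    using sol unfolding nd_inv_solution_def nondegenerate_on_def by blast
  then have inj: "\<forall>x\<in>Y. inj_on (\<alpha> x) Y"
    by (simp add: bij_betw_def)
  have "?O = Y" if "indecomposable Y \<alpha> \<beta>"
  proof (rule ccontr)
    assume "?O \<noteq> Y"
    have O_sub: "?O \<subseteq> Y"
      by (rule struct_orbit_subset_carrier[OF bij \<open>y \<in> Y\<close>])
    have O_stable: "\<forall>x\<in>Y. \<alpha> x ` ?O = ?O"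
      using struct_orbit_image_eq[OF bij \<open>y \<in> Y\<close>] by blast
    have compl_stable: "\<forall>x\<in>Y. \<alpha> x ` (Y - ?O) = Y - ?O"
      using O_stable O_sub bij by (simp add: image_complement_eq)
    have "decomposable Y \<alpha> \<beta>"
      unfolding decomposable_def
    proof (intro exI conjI)
      show "nd_invariant Y \<alpha> \<beta> ?O"
        by (rule nd_invariant_if_image_eq[OF \<open>finite Y\<close> sol O_sub O_stable])
      show "nd_invariant Y \<alpha> \<beta> (Y - ?O)"
        by (rule nd_invariant_if_image_eq[OF \<open>finite Y\<close> sol Diff_subset compl_stable])
    qed (use \<open>?O \<noteq> Y\<close> O_sub struct_orbit.base[of y Y \<alpha>] in blast)+
    with that show False
      unfolding indecomposable_def by blast
  qed
  moreover have "indecomposable Y \<alpha> \<beta>" if "?O = Y"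
  proof -
    have part_contains_orbit: "?O \<subseteq> Z1"
      if "nd_invariant Y \<alpha> \<beta> Z1" "nd_invariant Y \<alpha> \<beta> Z2" "Z1 \<inter> Z2 = {}" "Z1 \<union> Z2 = Y"
        and "y \<in> Z1" for Z1 Z2
      using struct_orbit_subset[OF inj \<open>y \<in> Z1\<close>] decomposition_part_image_eq[OF sol that(1-4)] that(4)
      by blast
    show ?thesis
      unfolding indecomposable_def decomposable_def
    proof (intro notI, elim exE conjE)
      fix Z1 Z2 assume "Z1 \<noteq> {}" "Z2 \<noteq> {}" "Z1 \<inter> Z2 = {}" "Z1 \<union> Z2 = Y"
        and Z1: "nd_invariant Y \<alpha> \<beta> Z1" and Z2: "nd_invariant Y \<alpha> \<beta> Z2"
      then have "Y \<subseteq> Z1 \<or> Y \<subseteq> Z2"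
        using part_contains_orbit[OF Z1 Z2] part_contains_orbit[OF Z2 Z1] \<open>?O = Y\<close> \<open>y \<in> Y\<close>
        by (auto simp: Int_commute Un_commute)
      then show False
        using \<open>Z1 \<noteq> {}\<close> \<open>Z2 \<noteq> {}\<close> \<open>Z1 \<inter> Z2 = {}\<close> \<open>Z1 \<union> Z2 = Y\<close> by blast
    qed
  qed
  ultimately show ?thesis by blast
qed

lemma word_apply_Cons [simp]: "word_apply \<sigma> (i # is) x = \<sigma> i (word_apply \<sigma> is x)"
  by (simp add: word_apply_def)

lemma word_apply_Nil [simp]: "word_apply \<sigma> [] x = x"
  by (simp add: word_apply_def)

lemma word_apply_mem:
  assumes "\<forall>i\<in>Y. \<forall>z\<in>Y. \<sigma> i z \<in> Y" "set is \<subseteq> Y" "x \<in> Y"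
  shows "word_apply \<sigma> is x \<in> Y"
  using assms(2) by (induction "is") (use assms(1,3) in auto)

definition word_pairs :: "nat set \<Rightarrow> (nat \<Rightarrow> nat \<Rightarrow> nat) \<Rightarrow> nat \<Rightarrow> nat \<Rightarrow> (nat \<times> nat) set" where
  "word_pairs Y \<sigma> x l = {(s, m). \<exists>is ks. length is = l \<and> length ks = l \<and> set is \<subseteq> Y \<and> set ks \<subseteq> Y \<and>
     word_apply \<sigma> is x = s \<and> word_apply \<sigma> ks x = m}"

lemma ind_g_word_pairs:
  assumes "T \<in> Y \<times> Y" "p \<in> word_pairs Y \<sigma> x l"
  shows "ind_g \<sigma> T p \<in> word_pairs Y \<sigma> x (Suc l)"
proof -
  obtain "is" ks where "length is = l" "length ks = l" "set is \<subseteq> Y" "set ks \<subseteq> Y"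
    and p: "p = (word_apply \<sigma> is x, word_apply \<sigma> ks x)"
    using assms(2) unfolding word_pairs_def by blast
  then show ?thesis
    using assms(1) unfolding word_pairs_def ind_g_def
    by (intro CollectI case_prodI exI[of _ "fst T # is"] exI[of _ "snd T # ks"]) auto
qed

lemma word_pairs_subset_struct_orbit:
  "word_pairs Y \<sigma> x l \<subseteq> struct_orbit (Y \<times> Y) (ind_g \<sigma>) (x, x)"
proof (induction l)
  case 0
  then show ?case
    by (auto simp: word_pairs_def intro: struct_orbit.base)
next
  case (Suc l)
  show ?case
  proof
    fix p assume "p \<in> word_pairs Y \<sigma> x (Suc l)"
    then obtain i k "is" ks where "length is = l" "length ks = l" "set is \<subseteq> Y" "set ks \<subseteq> Y" "i \<in> Y" "k \<in> Y"
      and p: "p = ind_g \<sigma> (i, k) (word_apply \<sigma> is x, word_apply \<sigma> ks x)"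
      unfolding word_pairs_def ind_g_def by (auto simp: length_Suc_conv)
    then have "(word_apply \<sigma> is x, word_apply \<sigma> ks x) \<in> struct_orbit (Y \<times> Y) (ind_g \<sigma>) (x, x)"
      using Suc.IH unfolding word_pairs_def by blast
    then show "p \<in> struct_orbit (Y \<times> Y) (ind_g \<sigma>) (x, x)"
      unfolding p using \<open>i \<in> Y\<close> \<open>k \<in> Y\<close> by (auto intro: struct_orbit.gen)
  qed
qed

lemma word_pairs_subset_carrier:
  assumes "\<forall>i\<in>Y. \<forall>z\<in>Y. \<sigma> i z \<in> Y" "x \<in> Y"
  shows "word_pairs Y \<sigma> x l \<subseteq> Y \<times> Y"
proof
  fix p assume "p \<in> word_pairs Y \<sigma> x l"
  then obtain "is" ks where "set is \<subseteq> Y" "set ks \<subseteq> Y" "p = (word_apply \<sigma> is x, word_apply \<sigma> ks x)"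
    unfolding word_pairs_def by blast
  then show "p \<in> Y \<times> Y"
    using word_apply_mem assms by simp
qed

lemma struct_orbit_induced_subset_word_pairs:
  assumes "finite Y" "x \<in> Y" and bij: "\<forall>i\<in>Y. bij_betw (\<sigma> i) Y Y"
  shows "struct_orbit (Y \<times> Y) (ind_g \<sigma>) (x, x) \<subseteq> (\<Union>l. word_pairs Y \<sigma> x l)"
proof (rule struct_orbit_subset)
  let ?W = "\<Union>l. word_pairs Y \<sigma> x l"
  have bij2: "\<forall>T\<in>Y \<times> Y. bij_betw (ind_g \<sigma> T) (Y \<times> Y) (Y \<times> Y)"
    using bij bij_betw_ind_g by blast
  then show inj2: "\<forall>T\<in>Y \<times> Y. inj_on (ind_g \<sigma> T) (Y \<times> Y)"
    by (simp add: bij_betw_def)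
  have "\<forall>i\<in>Y. \<forall>z\<in>Y. \<sigma> i z \<in> Y"
    using bij by (blast intro: bij_betw_apply)
  then show W_sub: "?W \<subseteq> Y \<times> Y"
    using word_pairs_subset_carrier \<open>x \<in> Y\<close> by blast
  have "(x, x) \<in> word_pairs Y \<sigma> x 0"
    unfolding word_pairs_def by (auto intro!: exI[of _ "[]"])
  then show "(x, x) \<in> ?W"
    by blast
  show "\<forall>T\<in>Y \<times> Y. ind_g \<sigma> T ` ?W = ?W"
  proof
    fix T assume T: "T \<in> Y \<times> Y"
    show "ind_g \<sigma> T ` ?W = ?W"
    proof (rule endo_inj_surj)
      show "finite ?W"
        using W_sub \<open>finite Y\<close> finite_subset by blast
      show "ind_g \<sigma> T ` ?W \<subseteq> ?W"
        using ind_g_word_pairs[OF T] by blast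
      show "inj_on (ind_g \<sigma> T) ?W"
        using inj2 T W_sub inj_on_subset by blast
    qed
  qed
qed

lemma mem_struct_orbit_induced_iff:
  assumes "finite Y" "x \<in> Y" and bij: "\<forall>i\<in>Y. bij_betw (\<sigma> i) Y Y"
  shows "p \<in> struct_orbit (Y \<times> Y) (ind_g \<sigma>) (x, x) \<longleftrightarrow> (\<exists>l\<ge>1. p \<in> word_pairs Y \<sigma> x l)"
proof
  let ?O = "struct_orbit (Y \<times> Y) (ind_g \<sigma>) (x, x)"
  have xx: "(x, x) \<in> Y \<times> Y"
    using \<open>x \<in> Y\<close> by blast
  assume "p \<in> ?O"
  then obtain q where "q \<in> ?O" "p = ind_g \<sigma> (x, x) q"
    using struct_orbit_image_eq[of "Y \<times> Y", OF _ xx xx] bij bij_betw_ind_g by blast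
  moreover obtain l where "q \<in> word_pairs Y \<sigma> x l"
    using struct_orbit_induced_subset_word_pairs[OF assms] \<open>q \<in> ?O\<close> by blast
  ultimately have "p \<in> word_pairs Y \<sigma> x (Suc l)"
    using ind_g_word_pairs[OF xx] by blast
  then show "\<exists>l\<ge>1. p \<in> word_pairs Y \<sigma> x l"
    by (intro exI[of _ "Suc l"]) simp
next
  assume "\<exists>l\<ge>1. p \<in> word_pairs Y \<sigma> x l"
  then show "p \<in> struct_orbit (Y \<times> Y) (ind_g \<sigma>) (x, x)"
    using word_pairs_subset_struct_orbit by blast
qed

lemma mem_word_pairs_iff:
  "(s, m) \<in> word_pairs Y \<sigma> x l \<longleftrightarrow> (\<exists>is ks. length is = l \<and> length ks = l \<and> set is \<subseteq> Y \<and> set ks \<subseteq> Y \<and>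
     word_apply \<sigma> is x = s \<and> word_apply \<sigma> ks x = m)"
  by (simp add: word_pairs_def)

lemma table_column_iff_word_pairs:
  assumes "s \<in> {1..n}" "m \<in> {1..n}"
  shows "s \<in> table_column n \<sigma> l \<and> m \<in> table_column n \<sigma> l \<longleftrightarrow> (s, m) \<in> word_pairs {1..n} \<sigma> 1 l"
  using assms unfolding table_column_def mem_word_pairs_iff by blast

theorem lemma3p11:
  fixes n :: nat and \<sigma> \<gamma> :: "nat \<Rightarrow> nat \<Rightarrow> nat"
  assumes "n \<ge> 1"
    and "nd_inv_solution {1..n} \<sigma> \<gamma>"
  defines "X2 \<equiv> {1..n} \<times> {1..n}"
  shows "(indecomposable X2 (ind_g \<sigma>) (ind_f \<gamma>) \<longleftrightarrow> struct_orbit X2 (ind_g \<sigma>) (1,1) = X2)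
       \<and> (struct_orbit X2 (ind_g \<sigma>) (1,1) = X2 \<longleftrightarrow>
           (\<forall>s\<in>{1..n}. \<forall>m\<in>{1..n}. \<exists>l\<ge>1. \<exists>is ks. length is = l \<and> length ks = l \<and>
               set is \<subseteq> {1..n} \<and> set ks \<subseteq> {1..n} \<and>
               word_apply \<sigma> is 1 = s \<and> word_apply \<sigma> ks 1 = m))
       \<and> ((\<forall>s\<in>{1..n}. \<forall>m\<in>{1..n}. \<exists>l\<ge>1. \<exists>is ks. length is = l \<and> length ks = l \<and>
               set is \<subseteq> {1..n} \<and> set ks \<subseteq> {1..n} \<and>
               word_apply \<sigma> is 1 = s \<and> word_apply \<sigma> ks 1 = m) \<longleftrightarrow>
           (\<forall>s\<in>{1..n}. \<forall>m\<in>{1..n}. \<exists>l\<ge>1. s \<in> table_column n \<sigma> l \<and> m \<in> table_column n \<sigma> l))"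
proof -
  let ?O = "struct_orbit X2 (ind_g \<sigma>) (1, 1)"
  have one: "1 \<in> {1..n}" "(1, 1) \<in> X2"
    using \<open>n \<ge> 1\<close> by (simp_all add: X2_def)
  have sol2: "nd_inv_solution X2 (ind_g \<sigma>) (ind_f \<gamma>)"
    unfolding X2_def using assms(2) by (rule nd_inv_solution_induced)
  have bij: "\<forall>i\<in>{1..n}. bij_betw (\<sigma> i) {1..n} {1..n}"
    using assms(2) unfolding nd_inv_solution_def nondegenerate_on_def by blast
  have "?O \<subseteq> X2"
    using sol2 struct_orbit_subset_carrier[OF _ one(2)] unfolding nd_inv_solution_def nondegenerate_on_def
    by blast
  then have "?O = X2 \<longleftrightarrow> (\<forall>s\<in>{1..n}. \<forall>m\<in>{1..n}. \<exists>l\<ge>1. (s, m) \<in> word_pairs {1..n} \<sigma> 1 l)"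
    unfolding X2_def using mem_struct_orbit_induced_iff[OF finite_atLeastAtMost one(1) bij] by blast
  moreover have "indecomposable X2 (ind_g \<sigma>) (ind_f \<gamma>) \<longleftrightarrow> ?O = X2"
    using indecomposable_iff_struct_orbit_eq[OF _ sol2 one(2)] by (simp add: X2_def)
  moreover have "(\<forall>s\<in>{1..n}. \<forall>m\<in>{1..n}. \<exists>l\<ge>1. (s, m) \<in> word_pairs {1..n} \<sigma> 1 l) \<longleftrightarrow>
      (\<forall>s\<in>{1..n}. \<forall>m\<in>{1..n}. \<exists>l\<ge>1. s \<in> table_column n \<sigma> l \<and> m \<in> table_column n \<sigma> l)"
    using table_column_iff_word_pairs by blast
  ultimately show ?thesis
    unfolding mem_word_pairs_iff by blast
qed

end
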